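(* For a positive integer $n$, let $f(n)$ be the maximum value of $\operatorname{Re}\big(\sum_{\xi\in S}\xi\big)$ and $g(n)$ the maximum value of $\big|\sum_{\xi \in S} \xi\big|$, both over all subsets $S$ of the set of $n$-th roots of unity. Then $g(n) = \sqrt{f(n)^2+1}$ if $4 \mid n$, and $g(n) = f(n)$ otherwise. *)

theory Defs
  imports "HOL-Complex_Analysis.Complex_Analysis"
begin

definition roots_of_unity :: "nat \<Rightarrow> complex set" where
  "roots_of_unity n = {z. z ^ n = 1}"

definition f_max :: "nat \<Rightarrow> real" where
  "f_max n = Max ((\<lambda>S. Re (\<Sum>\<xi>\<in>S. \<xi>)) ` Pow (roots_of_unity n))"

definition g_max :: "nat \<Rightarrow> real" where
  "g_max n = Max ((\<lambda>S. cmod (\<Sum>\<xi>\<in>S. \<xi>)) ` Pow (roots_of_unity n))"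

end

theory Submission
  imports Defs
begin

(* Let S be a set of n-th roots of unity maximising |sum S|. Adding or removing one root
   cannot increase the norm, so S consists exactly of the roots z with <z, sum S> > 0 and
   no root is orthogonal to sum S: S is the set of roots in an open half-plane whose boundary
   line contains no root. Such a set is an arc of L consecutive roots with |2L - n| < 2, and
   the modulus of an arc depends only on L and is invariant under L -> n - L. The maximiser
   of Re (sum S) is the arc in the right half-plane, of length 2 ((n - 1) div 4) + 1. If 4
   does not divide n, every admissible L gives this arc or its complement. If n = 4m, then
   L = 2m, and the optimal arc is the right half-plane arc, whose sum is real, together
   with the root i, which gives sqrt (f^2 + 1). *)

definition unit_root :: "nat \<Rightarrow> int \<Rightarrow> complex" where
  "unit_root n k = cis (2 * pi * of_int k / of_nat n)"

lemma unit_root_add: "unit_root n (k + l) = unit_root n k * unit_root n l"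
  by (simp add: unit_root_def cis_mult add_divide_distrib distrib_left)

lemma unit_root_uminus: "unit_root n (- k) = cnj (unit_root n k)"
  by (simp add: unit_root_def cis_cnj)

lemma norm_unit_root [simp]: "cmod (unit_root n k) = 1"
  by (simp add: unit_root_def)

lemma unit_root_eq_1_iff:
  assumes "n > 0"
  shows "unit_root n k = 1 \<longleftrightarrow> int n dvd k"
proof
  assume "unit_root n k = 1"
  then have "cos (2 * pi * of_int k / of_nat n) = 1"
    by (simp add: unit_root_def complex_eq_iff)
  then obtain j :: int where "2 * pi * of_int k / of_nat n = of_int j * 2 * pi"
    by (auto simp: cos_one_2pi_int)
  then have "real_of_int k = real_of_int (int n * j)"
    using assms by (simp add: field_simps)
  then show "int n dvd k"
    by (simp only: of_int_eq_iff) simp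
next
  assume "int n dvd k"
  then obtain j where "k = int n * j" ..
  then have "2 * pi * of_int k / of_nat n = 2 * pi * of_int j"
    using assms by simp
  then show "unit_root n k = 1"
    by (simp add: unit_root_def)
qed

lemma unit_root_eq_iff:
  assumes "n > 0"
  shows "unit_root n k = unit_root n l \<longleftrightarrow> int n dvd k - l"
proof -
  have "unit_root n k = unit_root n (k - l) * unit_root n l"
    by (simp flip: unit_root_add)
  moreover have "unit_root n l \<noteq> 0"
    using norm_unit_root[of n l] by (metis norm_zero zero_neq_one)
  ultimately show ?thesis
    using unit_root_eq_1_iff[OF assms] by (metis mult_cancel_right2)
qed

lemma inj_on_unit_root_window:
  assumes "n > 0"
  shows "inj_on (unit_root n) {a..<a + int n}"
proof (rule inj_onI)
  fix k l assume "k \<in> {a..<a + int n}" "l \<in> {a..<a + int n}" "unit_root n k = unit_root n l"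
  then have "int n dvd k - l" "\<bar>k - l\<bar> < int n"
    using unit_root_eq_iff[OF assms] by auto
  then show "k = l"
    using dvd_imp_le_int[of "k - l" "int n"] by fastforce
qed

lemma unit_root_in_roots_of_unity:
  assumes "n > 0"
  shows "unit_root n k \<in> roots_of_unity n"
proof -
  have "unit_root n k ^ n = cis (real n * (2 * pi * of_int k / of_nat n))"
    by (simp only: unit_root_def Complex.DeMoivre)
  also have "\<dots> = cis (2 * pi * of_int k)"
    using assms by simp
  also have "\<dots> = 1"
    by (rule cis_multiple_2pi) simp
  finally show ?thesis
    by (simp add: roots_of_unity_def)
qed

lemma roots_of_unity_eq_window:
  assumes "n > 0"
  shows "roots_of_unity n = unit_root n ` {a..<a + int n}"
proof (rule sym, rule card_subset_eq)
  show "finite (roots_of_unity n)"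
    using card_roots_unity_eq[OF assms] assms by (intro card_ge_0_finite) (simp add: roots_of_unity_def)
  show "unit_root n ` {a..<a + int n} \<subseteq> roots_of_unity n"
    using unit_root_in_roots_of_unity[OF assms] by blast
  show "card (unit_root n ` {a..<a + int n}) = card (roots_of_unity n)"
    using card_roots_unity_eq[OF assms]
    by (simp add: card_image inj_on_unit_root_window[OF assms] roots_of_unity_def)
qed

lemma finite_roots_of_unity: "n > 0 \<Longrightarrow> finite (roots_of_unity n)"
  by (simp add: roots_of_unity_eq_window[of n 0])

definition arc_norm :: "nat \<Rightarrow> nat \<Rightarrow> real" where
  "arc_norm n L = cmod (\<Sum>k\<in>{0..<int L}. unit_root n k)"

lemma sum_unit_root_shift:
  "(\<Sum>k\<in>{a..<a + int L}. unit_root n k) = unit_root n a * (\<Sum>k\<in>{0..<int L}. unit_root n k)"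
proof -
  have "(\<Sum>k\<in>{a..<a + int L}. unit_root n k) = (\<Sum>k\<in>{0..<int L}. unit_root n (a + k))"
    by (rule sum.reindex_cong[of "(+) a"]) (auto simp: add.commute)
  then show ?thesis
    by (simp add: unit_root_add sum_distrib_left)
qed

lemma sum_unit_root_image:
  assumes "n > 0" "L \<le> n"
  shows "\<Sum>(unit_root n ` {a..<a + int L}) = (\<Sum>k\<in>{a..<a + int L}. unit_root n k)"
  using inj_on_subset[OF inj_on_unit_root_window[OF assms(1)], of "{a..<a + int L}" a] assms(2)
  by (simp add: sum.reindex)

lemma norm_sum_unit_root_interval:
  "cmod (\<Sum>k\<in>{a..<a + int L}. unit_root n k) = arc_norm n L"
  by (simp add: sum_unit_root_shift norm_mult arc_norm_def)

lemma norm_sum_arc: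
  assumes "n > 0" "L \<le> n"
  shows "cmod (\<Sum>(unit_root n ` {a..<a + int L})) = arc_norm n L"
  by (simp add: sum_unit_root_image[OF assms] norm_sum_unit_root_interval)

lemma arc_norm_complement:
  assumes "n > 1" "L \<le> n"
  shows "arc_norm n (n - L) = arc_norm n L"
proof -
  have "(\<Sum>k\<in>{0..<int L}. unit_root n k) + (\<Sum>k\<in>{int L..<int L + int (n - L)}. unit_root n k)
      = (\<Sum>k\<in>{0..<0 + int n}. unit_root n k)"
  proof -
    have "{0..<int n} = {0..<int L} \<union> {int L..<int n}"
      using assms(2) by auto
    then show ?thesis
      using assms(2) by (simp add: sum.union_disjoint)
  qed
  also have "\<dots> = \<Sum>(roots_of_unity n)"
    using assms(1) sum_unit_root_image[of n n 0] by (simp add: roots_of_unity_eq_window[of n 0])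
  also have "\<dots> = 0"
    using sum_roots_unity[OF assms(1)] by (simp add: roots_of_unity_def)
  finally have "cmod (\<Sum>k\<in>{int L..<int L + int (n - L)}. unit_root n k) = arc_norm n L"
    by (simp add: arc_norm_def add_eq_0_iff2 norm_minus_commute)
  then show ?thesis
    by (simp add: sum_unit_root_shift norm_mult arc_norm_def)
qed

lemma sum_unit_root_symmetric_real: "(\<Sum>k\<in>{-q..q}. unit_root n k) \<in> \<real>"
proof -
  have "cnj (\<Sum>k\<in>{-q..q}. unit_root n k) = (\<Sum>k\<in>{-q..q}. unit_root n (- k))"
    by (simp add: unit_root_uminus)
  also have "\<dots> = (\<Sum>k\<in>{-q..q}. unit_root n k)"
    by (rule sum.reindex_bij_witness[of _ uminus uminus]) auto
  finally show ?thesis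
    by (simp add: Reals_cnj_iff)
qed

lemma arc_norm_quarter_plus_1:
  "arc_norm (4 * (q + 1)) (2 * q + 2) = sqrt ((arc_norm (4 * (q + 1)) (2 * q + 1))\<^sup>2 + 1)"
proof -
  let ?n = "4 * (q + 1)"
  define r where "r = (\<Sum>k\<in>{- int q..int q}. unit_root ?n k)"
  have angle: "2 * pi * of_int (int q + 1) / of_nat ?n = pi / 2"
    by (simp add: field_simps)
  have i: "unit_root ?n (int q + 1) = \<i>"
    unfolding unit_root_def angle by (rule cis_pi_half)
  have "{- int q..<- int q + int (2 * q + 2)} = insert (int q + 1) {- int q..int q}"
    by auto
  then have long: "arc_norm ?n (2 * q + 2) = cmod (r + \<i>)"
    using i norm_sum_unit_root_interval[of ?n "- int q" "2 * q + 2"] by (simp add: r_def add.commute)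
  have "{- int q..<- int q + int (2 * q + 1)} = {- int q..int q}"
    by auto
  then have short: "arc_norm ?n (2 * q + 1) = cmod r"
    using norm_sum_unit_root_interval[of ?n "- int q" "2 * q + 1"] by (simp add: r_def)
  obtain a where "r = complex_of_real a"
    using sum_unit_root_symmetric_real[of ?n "int q"] unfolding r_def by (auto elim: Reals_cases)
  then show ?thesis
    using long short by (simp add: norm_complex_def)
qed

lemma sin_pos_iff_less_pi:
  fixes t :: real
  assumes "0 \<le> t" "t < 2 * pi"
  shows "0 < sin t \<longleftrightarrow> 0 < t \<and> t < pi"
  using assms sin_gt_zero[of t] sin_le_zero[of t] by (cases "t < pi"; cases "t = 0") auto

lemma inner_unit_root_cis:
  "inner (unit_root n k) (cis (2 * pi * x / n + pi / 2)) = sin (2 * pi * (of_int k - x) / n)"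
proof -
  have "inner (unit_root n k) (cis (2 * pi * x / n + pi / 2))
          = cos (2 * pi * of_int k / n - (2 * pi * x / n + pi / 2))"
    by (simp add: unit_root_def inner_complex_def cos_diff)
  also have "2 * pi * of_int k / n - (2 * pi * x / n + pi / 2) = 2 * pi * (of_int k - x) / n - pi / 2"
    by (simp add: diff_divide_distrib algebra_simps)
  finally show ?thesis
    by (simp add: cos_diff)
qed

lemma roots_in_half_plane:
  assumes "n > 0"
  shows "{z \<in> roots_of_unity n. 0 < inner z (cis (2 * pi * x / n + pi / 2))}
           = unit_root n ` {k. x < of_int k \<and> of_int k < x + n / 2}"
proof -
  let ?W = "{\<lceil>x\<rceil>..<\<lceil>x\<rceil> + int n}"
  have pos_iff: "0 < inner (unit_root n k) (cis (2 * pi * x / n + pi / 2))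
                   \<longleftrightarrow> x < of_int k \<and> of_int k < x + n / 2" if "k \<in> ?W" for k
  proof -
    have "0 \<le> of_int k - x" "of_int k - x < n"
      using that ceiling_correct[of x] by (auto simp: ceiling_le_iff)
    then have "0 \<le> 2 * pi * (of_int k - x) / n" "2 * pi * (of_int k - x) / n < 2 * pi"
      using assms by (simp_all add: divide_less_eq)
    moreover have "0 < 2 * pi * (of_int k - x) / n \<longleftrightarrow> x < of_int k"
      using assms by (simp add: zero_less_divide_iff zero_less_mult_iff)
    moreover have "2 * pi * (of_int k - x) / n < pi \<longleftrightarrow> pi * (2 * (of_int k - x)) < pi * n"
      using assms by (simp add: divide_less_eq mult_ac)
    then have "2 * pi * (of_int k - x) / n < pi \<longleftrightarrow> of_int k < x + n / 2"
      by (auto simp: mult_less_cancel_left_pos)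
    ultimately show ?thesis
      by (simp add: inner_unit_root_cis sin_pos_iff_less_pi)
  qed
  have "{k. x < of_int k \<and> of_int k < x + n / 2} \<subseteq> ?W"
  proof safe
    fix k assume k: "x < of_int k" "of_int k < x + n / 2"
    then have "of_int k < real_of_int (\<lceil>x\<rceil> + int n)"
      using le_of_int_ceiling[of x] by simp linarith
    then show "k \<in> ?W"
      using k by (simp only: of_int_less_iff) (simp add: ceiling_le_iff)
  qed
  then show ?thesis
    unfolding roots_of_unity_eq_window[OF assms, of "\<lceil>x\<rceil>"] using pos_iff by auto
qed

lemma half_plane_boundary_free:
  assumes "n > 0" "\<forall>z \<in> roots_of_unity n. inner z (cis (2 * pi * x / n + pi / 2)) \<noteq> 0"
  shows "x \<notin> \<int>" "x + n / 2 \<notin> \<int>"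
proof -
  have sin_ne: "sin (2 * pi * (of_int k - x) / n) \<noteq> 0" for k
    using assms unit_root_in_roots_of_unity inner_unit_root_cis by metis
  show "x \<notin> \<int>"
  proof
    assume "x \<in> \<int>"
    then obtain k where "x = of_int k"
      by (auto elim: Ints_cases)
    then show False
      using sin_ne[of k] by simp
  qed
  show "x + n / 2 \<notin> \<int>"
  proof
    assume "x + n / 2 \<in> \<int>"
    then obtain k where "x + n / 2 = of_int k"
      by (auto elim: Ints_cases)
    then have "of_int k - x = n / 2"
      by simp
    then have "2 * pi * (of_int k - x) / n = 2 * pi * (n / 2) / n"
      by (simp only:)
    also have "\<dots> = pi"
      using assms(1) by simp
    finally show False
      using sin_ne[of k] by simp
  qed
qed

lemma ints_in_open_interval:
  fixes x y :: real
  assumes "x \<notin> \<int>" "y \<notin> \<int>" "x < y"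
  obtains a L where "{k. x < of_int k \<and> of_int k < y} = {a..<a + int L}"
    "y - x - 1 < real L" "real L < y - x + 1"
proof -
  have floor: "of_int \<lfloor>x\<rfloor> < x"
    using assms(1) of_int_floor_le[of x] by (metis Ints_of_int order_le_less)
  have ceiling: "y < of_int \<lceil>y\<rceil>"
    using assms(2) le_of_int_ceiling[of y] by (metis Ints_of_int order_le_less)
  define L where "L = nat (\<lceil>y\<rceil> - \<lfloor>x\<rfloor> - 1)"
  have "\<lfloor>x\<rfloor> < \<lceil>y\<rceil>"
    using floor ceiling assms(3) by linarith
  then have L: "int L = \<lceil>y\<rceil> - \<lfloor>x\<rfloor> - 1"
    by (simp add: L_def)
  then have real_L: "real L = of_int \<lceil>y\<rceil> - of_int \<lfloor>x\<rfloor> - 1"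
    by (metis of_int_of_nat_eq of_int_diff of_int_1)
  show ?thesis
  proof (rule that)
    show "{k. x < of_int k \<and> of_int k < y} = {\<lfloor>x\<rfloor> + 1..<\<lfloor>x\<rfloor> + 1 + int L}"
      unfolding L by (auto simp flip: floor_less_iff less_ceiling_iff)
    show "y - x - 1 < real L"
      using real_L floor_correct[of x] ceiling by linarith
    show "real L < y - x + 1"
      using real_L floor ceiling_correct[of y] by linarith
  qed
qed

lemma maximal_norm_subset_half_space:
  fixes R S :: "'a::real_inner set"
  assumes "finite R" "0 \<notin> R" "S \<subseteq> R" "z \<in> R"
    and max: "\<And>T. T \<subseteq> R \<Longrightarrow> norm (\<Sum>T) \<le> norm (\<Sum>S)"
  shows "z \<in> S \<longleftrightarrow> 0 < inner z (\<Sum>S)" "inner z (\<Sum>S) \<noteq> 0"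
proof -
  have fin: "finite S"
    using assms(1,3) by (rule finite_subset[rotated])
  have zz: "0 < inner z z"
    using assms(2,4) by auto
  have pos: "0 < inner z (\<Sum>S)" if "z \<in> S"
  proof -
    have "norm (\<Sum>S - z) \<le> norm (\<Sum>S)"
      using max[of "S - {z}"] assms(3) fin that by (auto simp: sum_diff1)
    then have "inner z z \<le> 2 * inner z (\<Sum>S)"
      by (simp add: norm_le inner_diff inner_commute)
    with zz show ?thesis
      by linarith
  qed
  have neg: "inner z (\<Sum>S) < 0" if "z \<notin> S"
  proof -
    have "norm (z + \<Sum>S) \<le> norm (\<Sum>S)"
      using max[of "insert z S"] assms(3,4) fin that by simp
    then have "2 * inner z (\<Sum>S) + inner z z \<le> 0"
      by (simp add: norm_le inner_add inner_commute)
    with zz show ?thesis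
      by linarith
  qed
  show "z \<in> S \<longleftrightarrow> 0 < inner z (\<Sum>S)" "inner z (\<Sum>S) \<noteq> 0"
    using pos neg by force+
qed

lemma Max_sum_Pow_eq_sum_positive:
  fixes h :: "'a \<Rightarrow> 'b::linordered_ab_group_add"
  assumes "finite A"
  shows "Max ((\<lambda>S. \<Sum>x\<in>S. h x) ` Pow A) = (\<Sum>x\<in>{x \<in> A. 0 < h x}. h x)"
proof (rule Max_eqI)
  let ?P = "{x \<in> A. 0 < h x}"
  show "finite ((\<lambda>S. \<Sum>x\<in>S. h x) ` Pow A)"
    using assms by simp
  show "(\<Sum>x\<in>?P. h x) \<in> (\<lambda>S. \<Sum>x\<in>S. h x) ` Pow A"
    by auto
  fix y assume "y \<in> (\<lambda>S. \<Sum>x\<in>S. h x) ` Pow A"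
  then obtain S where S: "S \<subseteq> A" "y = (\<Sum>x\<in>S. h x)"
    by auto
  have fin: "finite S"
    using assms S(1) by (rule finite_subset[rotated])
  have "y = (\<Sum>x\<in>S \<inter> ?P. h x) + (\<Sum>x\<in>S - ?P. h x)"
    using S(2) fin by (simp add: sum.Int_Diff)
  also have "(\<Sum>x\<in>S - ?P. h x) \<le> 0"
    using S(1) by (intro sum_nonpos) auto
  also have "(\<Sum>x\<in>S \<inter> ?P. h x) \<le> (\<Sum>x\<in>?P. h x)"
    using assms by (intro sum_mono2) auto
  finally show "y \<le> (\<Sum>x\<in>?P. h x)"
    by simp
qed

lemma f_max_eq_arc_norm:
  assumes "n > 0"
  shows "f_max n = arc_norm n (2 * ((n - 1) div 4) + 1)"
proof -
  define q where "q = (n - 1) div 4"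
  define P where "P = {z \<in> roots_of_unity n. 0 < Re z}"
  have arc: "{- int q..<- int q + int (2 * q + 1)} = {- int q..int q}"
    by auto
  have q: "2 * q + 1 \<le> n"
    using assms by (simp add: q_def)
  have f: "f_max n = (\<Sum>z\<in>P. Re z)"
    unfolding f_max_def P_def Re_sum
    by (rule Max_sum_Pow_eq_sum_positive[OF finite_roots_of_unity[OF assms]])
  have "cis (2 * pi * (- real n / 4) / n + pi / 2) = 1"
    using assms by simp
  moreover have "{k. - real n / 4 < of_int k \<and> of_int k < - real n / 4 + n / 2} = {- int q..int q}"
  proof -
    have "- real n / 4 < of_int k \<and> of_int k < - real n / 4 + n / 2
            \<longleftrightarrow> real_of_int (- int n) < of_int (4 * k) \<and> real_of_int (4 * k) < of_int (int n)" for k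
      by auto
    also have "\<dots> k \<longleftrightarrow> k \<in> {- int q..int q}" for k
    proof -
      have "n = 4 * q + (n - 1) mod 4 + 1" "(n - 1) mod 4 < 4"
        using assms unfolding q_def by simp_all
      then show ?thesis
        unfolding atLeastAtMost_iff of_int_less_iff by auto
    qed
    finally show ?thesis
      by blast
  qed
  ultimately have P: "P = unit_root n ` {- int q..int q}"
    using roots_in_half_plane[OF assms, of "- real n / 4"] by (simp add: P_def)
  then have "\<Sum>P \<in> \<real>"
    using sum_unit_root_image[OF assms q, of "- int q"] sum_unit_root_symmetric_real
    by (simp only: arc)
  moreover have "0 \<le> Re (\<Sum>P)"
    by (auto simp: P_def intro: sum_nonneg)
  ultimately have "f_max n = cmod (\<Sum>P)"
    by (simp add: f complex_is_Real_iff cmod_eq_Re)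
  then show ?thesis
    using P norm_sum_arc[OF assms q, of "- int q", unfolded arc] by (simp add: q_def)
qed

lemma g_max_eq_arc_norm:
  assumes "n > 0"
  obtains L where "0 < L" "n < 2 * L + 2" "2 * L < n + 2" "g_max n = arc_norm n L"
proof -
  let ?R = "roots_of_unity n"
  have fin: "finite ?R"
    using assms by (rule finite_roots_of_unity)
  have "g_max n \<in> (\<lambda>S. cmod (\<Sum>S)) ` Pow ?R"
    unfolding g_max_def using fin by (intro Max_in) auto
  then obtain S where S: "S \<subseteq> ?R" "g_max n = cmod (\<Sum>S)"
    by auto
  have max: "cmod (\<Sum>T) \<le> cmod (\<Sum>S)" if "T \<subseteq> ?R" for T
    using Max_ge[of "(\<lambda>S. cmod (\<Sum>S)) ` Pow ?R"] fin that S(2) unfolding g_max_def by auto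
  have "1 \<in> ?R"
    by (simp add: roots_of_unity_def)
  then have g1: "1 \<le> cmod (\<Sum>S)"
    using max[of "{1}"] by simp
  define \<theta> where "\<theta> = Arg (\<Sum>S)"
  define x where "x = n * \<theta> / (2 * pi) - n / 4"
  have \<theta>: "\<theta> = 2 * pi * x / n + pi / 2"
    using assms by (simp add: x_def field_simps)
  have inner_S: "inner z (\<Sum>S) = cmod (\<Sum>S) * inner z (cis \<theta>)" for z
    using rcis_cmod_Arg[of "\<Sum>S"] unfolding rcis_def \<theta>_def
    by (metis inner_scaleR_right scaleR_conv_of_real)
  have "0 \<notin> ?R"
    using assms by (simp add: roots_of_unity_def power_0_left)
  note half_space = maximal_norm_subset_half_space[OF fin this S(1) _ max]
  have half: "S = {z \<in> ?R. 0 < inner z (cis (2 * pi * x / n + pi / 2))}"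
    using half_space(1) S(1) g1 inner_S unfolding \<theta> by (auto simp: zero_less_mult_iff)
  obtain a L where ints: "{k. x < of_int k \<and> of_int k < x + n / 2} = {a..<a + int L}"
      and L: "n / 2 - 1 < real L" "real L < n / 2 + 1"
  proof (rule ints_in_open_interval)
    have "\<forall>z \<in> ?R. inner z (cis (2 * pi * x / n + pi / 2)) \<noteq> 0"
      using half_space(2) g1 inner_S unfolding \<theta> by auto
    then show "x \<notin> \<int>" "x + n / 2 \<notin> \<int>"
      using half_plane_boundary_free[OF assms] by blast+
  qed (use assms in auto)
  have "real L < real (n + 1)" "real n < real (2 * L + 2)" "real (2 * L) < real (n + 2)"
    using L by simp_all
  then have bounds: "L \<le> n" "n < 2 * L + 2" "2 * L < n + 2"
    by (simp_all only: of_nat_less_iff)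
  have g: "g_max n = arc_norm n L"
    using S(2) half roots_in_half_plane[OF assms] ints norm_sum_arc[OF assms bounds(1)] by simp
  have "L \<noteq> 0"
  proof
    assume "L = 0"
    then have "g_max n = 0"
      using g by (simp add: arc_norm_def)
    with g1 S(2) show False
      by simp
  qed
  with bounds g show ?thesis
    by (intro that) simp_all
qed

theorem lemma3p10:
  fixes n :: nat
  assumes "n > 0"
  shows "g_max n = (if 4 dvd n then sqrt ((f_max n)\<^sup>2 + 1) else f_max n)"
proof -
  define q where "q = (n - 1) div 4"
  have "n = 4 * q + (n - 1) mod 4 + 1" "(n - 1) mod 4 < 4"
    using assms unfolding q_def by simp_all
  then obtain t where n: "n = 4 * q + t + 1" "t < 4"
    by blast
  obtain L where L: "0 < L" "n < 2 * L + 2" "2 * L < n + 2" and g: "g_max n = arc_norm n L"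
    using g_max_eq_arc_norm[OF assms] .
  have f: "f_max n = arc_norm n (2 * q + 1)"
    using f_max_eq_arc_norm[OF assms] by (simp add: q_def)
  show ?thesis
  proof (cases "4 dvd n")
    case True
    then have "t = 3"
      using n by presburger
    then have "n = 4 * (q + 1)" "L = 2 * q + 2"
      using n L by simp_all
    then show ?thesis
      using True f g arc_norm_quarter_plus_1[of q] by simp
  next
    case False
    then have "t < 3"
      using n by presburger
    then have "L = 2 * q + 1 \<or> (1 < n \<and> 2 * q + 1 \<le> n \<and> L = n - (2 * q + 1))"
      using n L by linarith
    then show ?thesis
      using False f g arc_norm_complement by auto
  qed
qed

end
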